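(* Let $N\ge 2$, $\xi>0$, and consider the system of $N$ agents in the plane in which each agent interacts (by attraction and repulsion, isotropically) only with its single closest neighbor, i.e. $\dot x=f(x)$ with $f$ as in the context. Let $x^*\in(\mathbb{R}^2)^N\setminus S$. If for all $i\in\{1,\dots,N\}$ and all $k\in\mathcal{N}_i(x^* )$ it holds that $\|x^*_i-x^*_k\|=\xi$, then $x^*$ is a Filippov equilibrium of this system, i.e. $0\in K f(x^* )$, and moreover $1\le|\mathcal{N}_i(x^* )|\le 6$ for all $i\in\{1,\dots,N\}$.
   Context: Configurations are $x=(x_1,\dots,x_N)\in(\mathbb{R}^2)^N$, where $x_i$ is the position of agent $i$, and $\|\cdot\|$ is the Euclidean norm on $\mathbb{R}^2$. The set of degenerate configurations is $S=\{x: \exists\, i\neq j \text{ with } x_i=x_j\}$, and the set of switching configurations is $D=\{x:\exists\, i,j,k \text{ with } j\ne k,\ j,k\neq i,\ \|x_i-x_j\|=\|x_i-x_k\|\}$. For any configuration $x\notin S$, $\mathcal{N}_i(x)=\arg\min_{j\neq i}\|x_i-x_j\|$ is the (possibly multivalued) set of closest neighbors of agent $i$, and $|\mathcal{N}_i(x)|$ its cardinality. For $x\notin D\cup S$, $\mathcal{N}_i(x)=\{c_i(x)\}$ is a singleton and the vector field $f:(\mathbb{R}^2)^N\setminus(D\cup S)\to(\mathbb{R}^2)^N$ is defined componentwise by $$f_i(x)=\big(x_{c_i(x)}-x_i\big)-\xi^2\,\frac{x_{c_i(x)}-x_i}{\|x_{c_i(x)}-x_i\|^2},\qquad i=1,\dots,N.$$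 For $y\in(\mathbb{R}^2)^N$, $K f(y)=\bigcap_{\delta>0}\bigcap_{\mu(\Lambda)=0}\overline{\mathrm{co}}\{f(B(y,\delta)\setminus\Lambda)\}$, where $B(y,\delta)$ is the open Euclidean ball of radius $\delta$ about $y$, $\overline{\mathrm{co}}$ is the closed convex hull, $\mu$ is Lebesgue measure, and the inner intersection ranges over Lebesgue-null sets $\Lambda$ (points where $f$ is undefined are discarded). A configuration $x^*$ is a Filippov equilibrium if $0\in K f(x^* )$. *)

theory Defs
  imports "HOL-Analysis.Analysis"
begin

text \<open>A configuration of N agents in the plane is an element of (real^2)^'n,
  where the finite type 'n indexes the agents (N = CARD('n)).  The norm on
  real^2 is the Euclidean norm.\<close>

type_synonym 'n config = "(real^2)^'n"

definition degenerate :: "'n::finite config \<Rightarrow> bool" where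
  "degenerate x \<longleftrightarrow> (\<exists>i j. i \<noteq> j \<and> x$i = x$j)"

definition switching :: "'n::finite config \<Rightarrow> bool" where
  "switching x \<longleftrightarrow> (\<exists>i j k. j \<noteq> k \<and> j \<noteq> i \<and> k \<noteq> i \<and>
      norm (x$i - x$j) = norm (x$i - x$k))"

definition nbrs :: "'n::finite config \<Rightarrow> 'n \<Rightarrow> 'n set" where
  "nbrs x i = {j. j \<noteq> i \<and> (\<forall>k. k \<noteq> i \<longrightarrow> norm (x$i - x$j) \<le> norm (x$i - x$k))}"

text \<open>The closest neighbour c_i(x) (unique when x is neither switching nor degenerate).\<close>
definition cnb :: "'n::finite config \<Rightarrow> 'n \<Rightarrow> 'n" where
  "cnb x i = (THE j. j \<in> nbrs x i)"

text \<open>The vector field f, meaningful on configurations outside D \<union> S.\<close>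
definition fvec :: "real \<Rightarrow> 'n::finite config \<Rightarrow> 'n config" where
  "fvec \<xi> x = (\<chi> i. (x$(cnb x i) - x$i)
       - (\<xi>^2 / (norm (x$(cnb x i) - x$i))^2) *\<^sub>R (x$(cnb x i) - x$i))"

text \<open>Filippov set-valued map; points in D \<union> S (where f is undefined) are discarded.\<close>
definition filippov :: "real \<Rightarrow> 'n::finite config \<Rightarrow> 'n config set" where
  "filippov \<xi> y = (\<Inter>\<delta>\<in>{\<delta>. \<delta> > 0}. \<Inter>\<Lambda>\<in>null_sets lebesgue.
      closure (convex hull (fvec \<xi> ` (ball y \<delta> - \<Lambda> - {z. degenerate z \<or> switching z}))))"

end

theory Submission
  imports Defs
begin

text \<open>In a configuration \<open>z\<close> near \<open>x\<close>, every agent's nearest neighbour is at distance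
  \<open>\<xi> + O(\<parallel>z - x\<parallel>)\<close>, and on that shell the attraction--repulsion term
  \<open>v - (\<xi>\<^sup>2/\<parallel>v\<parallel>\<^sup>2) v\<close> has size \<open>O(\<parallel>z - x\<parallel>)\<close>; so
  \<open>f z \<rightarrow> 0\<close> as \<open>z \<rightarrow> x\<close> off \<open>D \<union> S\<close>. This set is a finite union of closed sets with empty
  interior (moving one agent leaves any of them), so every ball about \<open>x\<close> minus a null set
  still meets its complement, and \<open>0\<close> lies in every closed convex hull in the definition of
  \<open>K f(x)\<close>. For the count: the nearest neighbours of agent \<open>i\<close> lie on the circle of radius
  \<open>\<xi>\<close> about \<open>x\<^sub>i\<close>, and any two of them are at least \<open>\<xi>\<close> apart because each one's own
  nearest neighbour is at distance \<open>\<xi>\<close>; at most six such points fit on the circle.\<close>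

lemma norm_axis: "norm (axis i v) = norm v"
proof -
  have "(\<Sum>l\<in>UNIV. (norm (axis i v $ l))\<^sup>2) = (\<Sum>l\<in>UNIV. if l = i then (norm v)\<^sup>2 else 0)"
    by (intro sum.cong) (auto simp: axis_def)
  then show ?thesis by (simp add: norm_vec_def L2_set_def)
qed

lemma dist_vec_replace_nth:
  fixes z :: "'a::real_normed_vector^'n"
  shows "dist (\<chi> l. if l = j then v else z$l) z = dist v (z$j)"
proof -
  have "(\<chi> l. if l = j then v else z$l) - z = axis j (v - z$j)"
    by (simp add: axis_def vec_eq_iff)
  then show ?thesis by (simp add: dist_norm norm_axis)
qed

lemma interior_sphere:
  fixes a :: "'a::euclidean_space"
  shows "interior (sphere a r) = {}"
  by (metis negligible_sphere negligible_subset interior_subset open_interior open_not_negligible)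

lemma interior_Union_closed_empty:
  assumes "finite F" "\<And>S. S \<in> F \<Longrightarrow> closed S \<and> interior S = {}"
  shows "interior (\<Union>F) = {}"
  using assms
proof (induction F rule: finite_induct)
  case (insert S F)
  then have "interior (\<Union>F \<union> S) = interior (\<Union>F)"
    by (intro interior_closed_Un_empty_interior) auto
  with insert show ?case by (simp add: Un_commute)
qed simp

lemma interior_vec_empty_if_slices:
  fixes A :: "('a::real_normed_vector^'n) set"
  assumes "\<And>z. z \<in> A \<Longrightarrow> \<exists>j. z$j \<notin> interior {v. (\<chi> l. if l = j then v else z$l) \<in> A}"
  shows "interior A = {}"
proof (rule ccontr)
  assume "interior A \<noteq> {}"
  then obtain z where "z \<in> interior A" by blast
  then obtain e where "e > 0" "ball z e \<subseteq> A" by (auto simp: mem_interior)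
  then have "z \<in> A" by (meson centre_in_ball subsetD)
  with assms obtain j where j: "z$j \<notin> interior {v. (\<chi> l. if l = j then v else z$l) \<in> A}"
    by blast
  have "ball (z$j) e \<subseteq> {v. (\<chi> l. if l = j then v else z$l) \<in> A}"
  proof
    fix v assume "v \<in> ball (z$j) e"
    then have "(\<chi> l. if l = j then v else z$l) \<in> ball z e"
      using dist_vec_replace_nth[of j v z] by (simp add: dist_commute)
    with \<open>ball z e \<subseteq> A\<close> show "v \<in> {v. (\<chi> l. if l = j then v else z$l) \<in> A}" by blast
  qed
  with \<open>e > 0\<close> have "z$j \<in> interior {v. (\<chi> l. if l = j then v else z$l) \<in> A}"
    by (auto simp: mem_interior)
  with j show False ..
qed

lemma interior_coincident_empty:
  assumes "i \<noteq> j"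
  shows "interior {z::('a::{real_normed_vector,perfect_space})^'n. z$i = z$j} = {}"
proof (rule interior_vec_empty_if_slices)
  fix z :: "'a^'n"
  have "{v. (\<chi> l. if l = j then v else z$l) \<in> {z. z$i = z$j}} = {z$i}"
    using assms by auto
  then show "\<exists>j'. z$j' \<notin> interior {v. (\<chi> l. if l = j' then v else z$l) \<in> {z. z$i = z$j}}"
    by (intro exI[of _ j]) simp
qed

lemma interior_equidistant_empty:
  assumes "j \<noteq> i" "j \<noteq> k"
  shows "interior {z::('a::euclidean_space)^'n. norm (z$i - z$j) = norm (z$i - z$k)} = {}"
proof (rule interior_vec_empty_if_slices)
  fix z :: "'a^'n"
  have "{v. (\<chi> l. if l = j then v else z$l) \<in> {z. norm (z$i - z$j) = norm (z$i - z$k)}}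
      = sphere (z$i) (norm (z$i - z$k))"
    using assms by (auto simp: dist_norm)
  then show "\<exists>j'. z$j' \<notin> interior {v. (\<chi> l. if l = j' then v else z$l)
      \<in> {z. norm (z$i - z$j) = norm (z$i - z$k)}}"
    by (intro exI[of _ j]) (simp add: interior_sphere)
qed

lemma closed_degenerate_or_switching: "closed {z::'n::finite config. degenerate z \<or> switching z}"
  and interior_degenerate_or_switching: "interior {z::'n config. degenerate z \<or> switching z} = {}"
proof -
  define F where "F = {{z::'n config. z$i = z$j} | i j. i \<noteq> j}
     \<union> {{z::'n config. norm (z$i - z$j) = norm (z$i - z$k)} | i j k. j \<noteq> k \<and> j \<noteq> i \<and> k \<noteq> i}"
  have eq: "{z::'n config. degenerate z \<or> switching z} = \<Union>F"
    unfolding F_def degenerate_def switching_def by blast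
  have "F \<subseteq> range (\<lambda>(i,j). {z::'n config. z$i = z$j})
      \<union> range (\<lambda>(i,j,k). {z::'n config. norm (z$i - z$j) = norm (z$i - z$k)})"
    unfolding F_def by auto
  then have "finite F" by (rule finite_subset) simp
  moreover have "closed S \<and> interior S = {}" if "S \<in> F" for S
  proof -
    from that consider i j where "i \<noteq> j" "S = {z. z$i = z$j}"
      | i j k where "j \<noteq> k" "j \<noteq> i" "S = {z. norm (z$i - z$j) = norm (z$i - z$k)}"
      unfolding F_def by blast
    then show ?thesis
    proof cases
      case 1
      then show ?thesis by (simp add: closed_Collect_eq continuous_on_component interior_coincident_empty)
    next
      case 2
      then show ?thesis
        by (simp add: closed_Collect_eq continuous_on_norm continuous_on_diff
            continuous_on_component interior_equidistant_empty)
    qed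
  qed
  ultimately show "closed {z::'n::finite config. degenerate z \<or> switching z}"
    and "interior {z::'n config. degenerate z \<or> switching z} = {}"
    unfolding eq by (simp_all add: closed_Union interior_Union_closed_empty)
qed

lemma zero_in_closure_image_off_negligible:
  fixes f :: "'a::euclidean_space \<Rightarrow> 'b::real_normed_vector"
  assumes "closed B" "interior B = {}" "\<Lambda> \<in> null_sets lebesgue" "\<delta> > 0"
    and "(f \<longlongrightarrow> 0) (at x within - B)"
  shows "0 \<in> closure (f ` (ball x \<delta> - \<Lambda> - B))"
  unfolding closure_approachable
proof (intro allI impI)
  fix e :: real assume "e > 0"
  with assms(5) obtain r where r: "r > 0" "\<And>z. z \<notin> B \<Longrightarrow> z \<noteq> x \<Longrightarrow> dist z x < r \<Longrightarrow> norm (f z) < e"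
    by (auto simp: tendsto_iff eventually_at)
  define U where "U = ball x (min r \<delta>) - B"
  have "U \<noteq> {}"
  proof
    assume "U = {}"
    then have "x \<in> interior B"
      using r \<open>\<delta> > 0\<close> by (auto simp: U_def mem_interior intro!: exI[of _ "min r \<delta>"])
    with assms(2) show False by simp
  qed
  moreover have "open U" using assms(1) by (simp add: U_def open_Diff)
  moreover have "negligible (\<Lambda> \<union> {x})"
    using assms(3) by (simp add: negligible_iff_null_sets)
  ultimately obtain z where "z \<in> U" "z \<notin> \<Lambda> \<union> {x}"
    by (metis negligible_subset open_not_negligible subsetI)
  then show "\<exists>y \<in> f ` (ball x \<delta> - \<Lambda> - B). dist y 0 < e"
    using r by (auto simp: U_def dist_commute intro!: bexI[of _ z])
qed

lemma nbrs_nonempty: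
  assumes "CARD('n::finite) \<ge> 2"
  shows "nbrs (z::'n config) i \<noteq> {}"
proof -
  have "\<not> UNIV \<subseteq> {i}"
    using card_mono[of "{i}" "UNIV::'n set"] assms by auto
  then have "finite {j. j \<noteq> i}" "{j. j \<noteq> i} \<noteq> {}" by auto
  from arg_min_if_finite[OF this, of "\<lambda>j. norm (z$i - z$j)"]
  show ?thesis unfolding nbrs_def by (auto simp: not_less)
qed

lemma nbrs_dist_le:
  assumes "j \<in> nbrs z i" "k \<noteq> i" shows "norm (z$i - z$j) \<le> norm (z$i - z$k)"
  using assms unfolding nbrs_def by auto

lemma cnb_in_nbrs:
  assumes "CARD('n::finite) \<ge> 2" "\<not> switching (z::'n config)"
  shows "cnb z i \<in> nbrs z i"
proof -
  obtain j where j: "j \<in> nbrs z i" using nbrs_nonempty[OF assms(1)] by auto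
  have "k = j" if k: "k \<in> nbrs z i" for k
  proof (rule ccontr)
    assume "k \<noteq> j"
    moreover have "k \<noteq> i" "j \<noteq> i" using j k by (auto simp: nbrs_def)
    moreover have "norm (z$i - z$j) = norm (z$i - z$k)"
      using nbrs_dist_le[OF j \<open>k \<noteq> i\<close>] nbrs_dist_le[OF k \<open>j \<noteq> i\<close>] by linarith
    ultimately have "switching z"
      unfolding switching_def by (intro exI[of _ i] exI[of _ j] exI[of _ k]) auto
    with assms(2) show False ..
  qed
  with j have "cnb z i = j" unfolding cnb_def by (intro the_equality)
  with j show ?thesis by simp
qed

lemma dist_ge_if_nbrs_at_dist:
  fixes x :: "'n::finite config"
  assumes "CARD('n) \<ge> 2" "\<forall>i. \<forall>k \<in> nbrs x i. norm (x$i - x$k) = \<xi>" "l \<noteq> k"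
  shows "\<xi> \<le> norm (x$k - x$l)"
proof -
  obtain c where c: "c \<in> nbrs x k" using nbrs_nonempty[OF assms(1)] by blast
  then have "norm (x$k - x$c) = \<xi>" using assms(2) by blast
  moreover have "norm (x$k - x$c) \<le> norm (x$k - x$l)" using nbrs_dist_le[OF c assms(3)] .
  ultimately show ?thesis by simp
qed

lemma norm_diff_nth_diff_le:
  fixes z x :: "'a::real_normed_vector^'n::finite"
  shows "\<bar>norm (z$i - z$j) - norm (x$i - x$j)\<bar> \<le> 2 * dist z x"
proof -
  have "\<bar>norm (z$i - z$j) - norm (x$i - x$j)\<bar> \<le> norm ((z - x)$i - (z - x)$j)"
    using norm_triangle_ineq3[of "z$i - z$j" "x$i - x$j"] by (simp add: algebra_simps)
  also have "\<dots> \<le> norm ((z - x)$i) + norm ((z - x)$j)" by (rule norm_triangle_ineq4)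
  also have "\<dots> \<le> 2 * dist z x" unfolding dist_norm
    using Finite_Cartesian_Product.norm_nth_le[of "z - x" i] Finite_Cartesian_Product.norm_nth_le[of "z - x" j]
    by linarith
  finally show ?thesis .
qed

lemma nbrs_dist_diff_le:
  assumes "j \<in> nbrs z i" "c \<in> nbrs x i"
  shows "\<bar>norm (z$i - z$j) - norm (x$i - x$c)\<bar> \<le> 2 * dist z x"
proof -
  have "j \<noteq> i" "c \<noteq> i" using assms by (auto simp: nbrs_def)
  have "norm (z$i - z$j) \<le> norm (z$i - z$c)" using nbrs_dist_le[OF assms(1) \<open>c \<noteq> i\<close>] .
  moreover have "norm (x$i - x$c) \<le> norm (x$i - x$j)" using nbrs_dist_le[OF assms(2) \<open>j \<noteq> i\<close>] .
  ultimately show ?thesis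
    using norm_diff_nth_diff_le[of z i c x] norm_diff_nth_diff_le[of z i j x] by linarith
qed

lemma norm_attraction_repulsion_le:
  fixes v :: "'a::real_normed_vector"
  assumes "\<xi> > 0" "\<bar>norm v - \<xi>\<bar> \<le> \<xi>/2"
  shows "norm (v - (\<xi>^2 / (norm v)^2) *\<^sub>R v) \<le> 3 * \<bar>norm v - \<xi>\<bar>"
proof -
  define m where "m = norm v"
  have "m > 0" "\<xi> \<le> 2 * m" using assms unfolding m_def abs_le_iff by linarith+
  have factor: "(1 - \<xi>^2 / m^2) * m = (m - \<xi>) * ((m + \<xi>) / m)"
    using \<open>m > 0\<close> by (simp add: field_simps power2_eq_square)
  have "v - (\<xi>^2 / m^2) *\<^sub>R v = (1 - \<xi>^2 / m^2) *\<^sub>R v"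
    by (simp add: scaleR_diff_left)
  then have "norm (v - (\<xi>^2 / m^2) *\<^sub>R v) = \<bar>(1 - \<xi>^2 / m^2) * m\<bar>"
    using \<open>m > 0\<close> by (simp add: m_def abs_mult)
  also have "\<dots> = \<bar>m - \<xi>\<bar> * ((m + \<xi>) / m)"
    using factor \<open>m > 0\<close> \<open>\<xi> > 0\<close> by (simp add: abs_mult)
  also have "\<dots> \<le> \<bar>m - \<xi>\<bar> * 3"
    using \<open>m > 0\<close> \<open>\<xi> \<le> 2 * m\<close> by (intro mult_left_mono) (auto simp: divide_le_eq)
  finally show ?thesis by (simp add: m_def)
qed

lemma norm_fvec_le:
  fixes x z :: "'n::finite config"
  assumes "CARD('n) \<ge> 2" "\<xi> > 0" "\<forall>i. \<forall>k \<in> nbrs x i. norm (x$i - x$k) = \<xi>"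
    and "\<not> switching z" "dist z x \<le> \<xi>/4"
  shows "norm (fvec \<xi> z) \<le> 6 * CARD('n) * dist z x"
proof -
  have component: "norm (fvec \<xi> z $ i) \<le> 6 * dist z x" for i
  proof -
    define v where "v = z$(cnb z i) - z$i"
    obtain c where c: "c \<in> nbrs x i" using nbrs_nonempty[OF assms(1)] by blast
    have "norm v = norm (z$i - z$(cnb z i))" by (simp add: v_def norm_minus_commute)
    moreover have "norm (x$i - x$c) = \<xi>" using assms(3) c by blast
    ultimately have "\<bar>norm v - \<xi>\<bar> \<le> 2 * dist z x"
      using nbrs_dist_diff_le[OF cnb_in_nbrs[OF assms(1,4)] c] by simp
    moreover have "fvec \<xi> z $ i = v - (\<xi>^2 / (norm v)^2) *\<^sub>R v"
      by (simp add: fvec_def v_def)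
    ultimately show ?thesis
      using norm_attraction_repulsion_le[OF assms(2), of v] assms(5) by simp
  qed
  have "norm (fvec \<xi> z) \<le> (\<Sum>i\<in>UNIV. norm (fvec \<xi> z $ i))"
    by (simp add: norm_vec_def L2_set_le_sum)
  also have "\<dots> \<le> CARD('n) * (6 * dist z x)"
    using sum_bounded_above[of "UNIV::'n set" "\<lambda>i. norm (fvec \<xi> z $ i)"] component by simp
  finally show ?thesis by simp
qed

lemma fvec_tendsto_zero:
  fixes x :: "'n::finite config"
  assumes "CARD('n) \<ge> 2" "\<xi> > 0" "\<forall>i. \<forall>k \<in> nbrs x i. norm (x$i - x$k) = \<xi>"
  shows "(fvec \<xi> \<longlongrightarrow> 0) (at x within - {z. degenerate z \<or> switching z})"
proof (rule Lim_null_comparison)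
  show "\<forall>\<^sub>F z in at x within - {z. degenerate z \<or> switching z}.
      norm (fvec \<xi> z) \<le> 6 * CARD('n) * dist z x"
    unfolding eventually_at using assms(2) norm_fvec_le[OF assms]
    by (intro exI[of _ "\<xi>/4"]) auto
  show "((\<lambda>z. 6 * CARD('n) * dist z x) \<longlongrightarrow> 0) (at x within - {z. degenerate z \<or> switching z})"
    by (intro tendsto_eq_intros) auto
qed

lemma zero_in_filippov:
  fixes x :: "'n::finite config"
  assumes "CARD('n) \<ge> 2" "\<xi> > 0" "\<forall>i. \<forall>k \<in> nbrs x i. norm (x$i - x$k) = \<xi>"
  shows "0 \<in> filippov \<xi> x"
  unfolding filippov_def
proof (intro InterI, clarify)
  fix \<delta> :: real and \<Lambda> :: "'n config set"
  assume "\<delta> > 0" "\<Lambda> \<in> null_sets lebesgue"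
  then have "0 \<in> closure (fvec \<xi> ` (ball x \<delta> - \<Lambda> - {z. degenerate z \<or> switching z}))"
    using closed_degenerate_or_switching interior_degenerate_or_switching fvec_tendsto_zero[OF assms]
    by (intro zero_in_closure_image_off_negligible)
  then show "0 \<in> closure (convex hull (fvec \<xi> ` (ball x \<delta> - \<Lambda> - {z. degenerate z \<or> switching z})))"
    by (meson closure_mono hull_subset subsetD)
qed

lemma cmod_rcis_diff_sq: "(cmod (rcis r a - rcis r b))^2 = r^2 * (2 - 2 * cos (a - b))"
proof -
  have "(cmod (rcis r a - rcis r b))^2 = (r * cos a - r * cos b)^2 + (r * sin a - r * sin b)^2"
    by (simp add: cmod_power2)
  also have "\<dots> = r^2 * ((sin a)^2 + (cos a)^2) + r^2 * ((sin b)^2 + (cos b)^2)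
      - 2 * r^2 * (cos a * cos b + sin a * sin b)"
    by algebra
  also have "\<dots> = r^2 * (2 - 2 * cos (a - b))"
    unfolding sin_cos_squared_add cos_diff by algebra
  finally show ?thesis .
qed

lemma cos_gt_half:
  assumes "\<bar>t\<bar> < pi/3"
  shows "cos t > 1/2"
proof -
  have "cos (pi/3) < cos \<bar>t\<bar>"
    using assms pi_gt_zero by (subst cos_mono_less_eq) auto
  then show ?thesis by (simp add: cos_60)
qed

text \<open>Cut the circle into six arcs of angle \<open>pi/3\<close>: two points on the same arc subtend an
  angle below \<open>pi/3\<close> and are therefore closer than \<open>r\<close>.\<close>
lemma card_le_six_if_separated_on_circle:
  fixes p :: "'a \<Rightarrow> complex"
  assumes "r > 0" "\<And>k. k \<in> P \<Longrightarrow> cmod (p k) = r"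
    and "\<And>k l. k \<in> P \<Longrightarrow> l \<in> P \<Longrightarrow> k \<noteq> l \<Longrightarrow> r \<le> cmod (p k - p l)"
  shows "card P \<le> 6"
proof -
  define t where "t k = (Arg (p k) + pi) * 3 / pi" for k
  define arc where "arc k = \<lceil>t k\<rceil>" for k
  have "arc k \<in> {1..6}" for k
  proof -
    have "0 < t k" "t k \<le> 6" using Arg_bounded[of "p k"] by (auto simp: t_def field_simps)
    then show ?thesis by (auto simp: arc_def ceiling_le_iff less_ceiling_iff)
  qed
  moreover have "inj_on arc P"
  proof (rule inj_onI, rule ccontr)
    fix k l assume "k \<in> P" "l \<in> P" "arc k = arc l" "k \<noteq> l"
    define d where "d = Arg (p k) - Arg (p l)"
    have "\<bar>t k - t l\<bar> < 1"
      using ceiling_correct[of "t k"] ceiling_correct[of "t l"] \<open>arc k = arc l\<close>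
      unfolding arc_def by linarith
    moreover have "t k - t l = d * (3 / pi)"
      unfolding t_def d_def by (simp add: field_simps)
    ultimately have "\<bar>d\<bar> * (3 / pi) < 1"
      by (simp add: abs_mult)
    then have "\<bar>d\<bar> < pi/3"
      by (simp add: field_simps)
    then have "2 - 2 * cos d < 1"
      using cos_gt_half by fastforce
    then have "r^2 * (2 - 2 * cos d) < r^2"
      using assms(1) by simp
    moreover have "p k = rcis r (Arg (p k))" "p l = rcis r (Arg (p l))"
      using rcis_cmod_Arg assms(2) \<open>k \<in> P\<close> \<open>l \<in> P\<close> by metis+
    then have "(cmod (p k - p l))^2 = r^2 * (2 - 2 * cos d)"
      unfolding d_def using cmod_rcis_diff_sq by metis
    moreover have "r^2 \<le> (cmod (p k - p l))^2"
      using assms(1,3) \<open>k \<in> P\<close> \<open>l \<in> P\<close> \<open>k \<noteq> l\<close> by (simp add: power_mono)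
    ultimately show False by linarith
  qed
  ultimately have "card P \<le> card {1..6::int}"
    by (intro card_inj_on_le) auto
  then show ?thesis by simp
qed

lemma cmod_Complex_vec: "cmod (Complex (v$1) (v$2)) = norm (v::real^2)"
  by (simp add: complex_norm norm_vec_def L2_set_def sum_2)

lemma card_nbrs_le_six:
  fixes x :: "'n::finite config"
  assumes "CARD('n) \<ge> 2" "\<xi> > 0" "\<forall>i. \<forall>k \<in> nbrs x i. norm (x$i - x$k) = \<xi>"
  shows "card (nbrs x i) \<le> 6"
proof (rule card_le_six_if_separated_on_circle)
  let ?p = "\<lambda>k. Complex ((x$k - x$i)$1) ((x$k - x$i)$2)"
  show "cmod (?p k) = \<xi>" if "k \<in> nbrs x i" for k
    using assms(3) that by (simp only: cmod_Complex_vec norm_minus_commute)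
  show "\<xi> \<le> cmod (?p k - ?p l)" if "k \<noteq> l" for k l
  proof -
    have "?p k - ?p l = Complex ((x$k - x$l)$1) ((x$k - x$l)$2)"
      by (simp add: complex_eq_iff)
    then have "cmod (?p k - ?p l) = norm (x$k - x$l)"
      by (simp only: cmod_Complex_vec)
    then show ?thesis
      using dist_ge_if_nbrs_at_dist[OF assms(1,3), of l k] that by simp
  qed
qed fact

theorem mainTheorem2:
  fixes x :: "(real^2)^'n::finite" and \<xi> :: real
  assumes "CARD('n) \<ge> 2"
    and "\<xi> > 0"
    and "\<not> degenerate x"
    and "\<forall>i. \<forall>k \<in> nbrs x i. norm (x$i - x$k) = \<xi>"
  shows "0 \<in> filippov \<xi> x \<and> (\<forall>i. 1 \<le> card (nbrs x i) \<and> card (nbrs x i) \<le> 6)"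
proof (intro conjI allI)
  show "0 \<in> filippov \<xi> x"
    using zero_in_filippov assms(1,2,4) .
  fix i
  show "1 \<le> card (nbrs x i)"
    using nbrs_nonempty[OF assms(1)] by (simp add: Suc_le_eq card_gt_0_iff)
  show "card (nbrs x i) \<le> 6"
    using card_nbrs_le_six assms(1,2,4) .
qed

end
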